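(* Let $C\subseteq\mathbb F_2^n$ be a binary linear code all of whose nonzero words have Hamming weight at least $4$. Let $(e_1,\dots,e_n)$ be an orthonormal basis of a Euclidean space $E$ and let $\Lambda_C$ be the lattice generated by $\mathbb Z^n=\bigoplus_i\mathbb Z e_i$ together with the vectors $\tfrac12\sum_i x_ie_i$, where $x\in\{0,1\}^n$ runs through the representatives of the words of $C$. Let $w_4$ be the number of words of $C$ of weight $4$, and let $t$ be the number of $2$-element subsets $\{i,j\}\subseteq\{1,\dots,n\}$ such that $i$ and $j$ do not both lie in the support of a single weight-$4$ word of $C$. Then $$s(\Lambda_C)=n+8w_4\quad\text{and}\quad \operatorname{perf}(\Lambda_C)=\frac{n(n+1)}2-t.$$
   Context: For a lattice $\Lambda$, $\min\Lambda=\min_{x\in\Lambda\setminus\{0\}}x\cdot x$, $S(\Lambda)$ is the set of vectors attaining the minimum, and $s(\Lambda)=|S(\Lambda)|/2$. Perfection rank: let $\mathcal S^n$ be the space of real symmetric $n\times n$ matrices and $\mathcal R=\{G\in\mathcal S^n: x^tGx\ge 1\ \forall x\in\mathbb Z^n\setminus\{0\}\}$ the Ryshkov polyhedron (a locally finite polyhedron). If a lattice has minimum $1$ and $G$ is the Gram matrix of one of its bases, $G$ lies in the relative interior of a face of $\mathcal R$ of some dimension $k$ (independent of the basis); the perfection rank is $\operatorname{perf}(\Lambda)=\dim\mathcal S^n-k=\frac{n(n+1)}2-k$ (equivalently, the dimension of the span of $\{xx^t\}$ over the minimal vectors $x$ in coordinates). Perfection rank is invariant under scaling. *)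

theory Defs
  imports "HOL-Analysis.Analysis" "HOL-Library.Z2"
begin

text \<open>Binary linear codes of length CARD('n): subsets of F_2^n closed under the
  F_2-vector space operations (for F_2, closure under scalars is automatic).\<close>
definition binary_linear_code :: "(bit ^ 'n) set \<Rightarrow> bool" where
  "binary_linear_code C \<longleftrightarrow> 0 \<in> C \<and> (\<forall>x\<in>C. \<forall>y\<in>C. x + y \<in> C)"

definition code_supp :: "bit ^ 'n \<Rightarrow> 'n set" where
  "code_supp x = {i. x $ i \<noteq> 0}"

definition hamming_weight :: "bit ^ 'n \<Rightarrow> nat" where
  "hamming_weight x = card (code_supp x)"

definition lattice_gen :: "(real ^ 'n) set \<Rightarrow> (real ^ 'n) set" where
  "lattice_gen G = {(\<Sum>g\<in>F. of_int (k g) *\<^sub>R g) | F k. finite F \<and> F \<subseteq> G}"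

definition code_lattice :: "(bit ^ 'n) set \<Rightarrow> (real ^ 'n) set" where
  "code_lattice C = lattice_gen ({axis i 1 | i. True} \<union>
      {(\<chi> i. if x $ i = 1 then 1/2 else 0) | x. x \<in> C})"

definition lat_min :: "(real ^ 'n) set \<Rightarrow> real" where
  "lat_min L = Inf {v \<bullet> v | v. v \<in> L \<and> v \<noteq> 0}"

definition min_vectors :: "(real ^ 'n) set \<Rightarrow> (real ^ 'n) set" where
  "min_vectors L = {v \<in> L. v \<noteq> 0 \<and> v \<bullet> v = lat_min L}"

definition kissing_s :: "(real ^ 'n) set \<Rightarrow> nat" where
  "kissing_s L = card (min_vectors L) div 2"

definition outer :: "real ^ 'n \<Rightarrow> real ^ 'n ^ 'n" where
  "outer x = (\<chi> i j. x $ i * x $ j)"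

definition perf_rank :: "(real ^ 'n) set \<Rightarrow> nat" where
  "perf_rank L = dim (outer ` min_vectors L)"

end

theory Submission
  imports Defs
begin

text \<open>Every vector of \<open>\<Lambda>\<^sub>C\<close> lies in a coset \<open>x/2 + \<int>\<^sup>n\<close> with \<open>x \<in> C\<close>. For \<open>x = 0\<close> a
  nonzero vector has norm at least 1, with equality exactly at \<open>\<plusminus>e\<^sub>i\<close>; for \<open>x \<noteq> 0\<close> each of the
  at least four coordinates in the support of \<open>x\<close> contributes at least 1/4, so the norm is
  again at least 1, with equality exactly for the 16 sign vectors \<open>(\<plusminus>1/2)\<close> on the support of
  a weight-4 word. This gives \<open>2n + 16 w\<^sub>4\<close> minimal vectors. Their rank-one matrices span
  precisely the symmetric matrices supported on the diagonal and on the pairs \<open>{i, j}\<close> lying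
  in the support of a weight-4 word: \<open>e\<^sub>i e\<^sub>i\<^sup>t\<close> gives the diagonal entries, and the
  off-diagonal pair \<open>{i, j}\<close> is an alternating sum over the four sign vectors that differ
  only at \<open>i\<close> and \<open>j\<close>. Hence the perfection rank is \<open>n + (n choose 2) - t\<close>.\<close>

lemma lattice_gen_base: "g \<in> G \<Longrightarrow> g \<in> lattice_gen G"
  unfolding lattice_gen_def by (intro CollectI exI[of _ "{g}"] exI[of _ "\<lambda>_. 1"]) simp

lemma lattice_gen_zero: "0 \<in> lattice_gen G"
  unfolding lattice_gen_def by (intro CollectI exI[of _ "{}"]) auto

lemma lattice_gen_uminus: "a \<in> lattice_gen G \<Longrightarrow> - a \<in> lattice_gen G"
proof -
  assume "a \<in> lattice_gen G"
  then obtain F k where F: "finite F" "F \<subseteq> G" "a = (\<Sum>g\<in>F. of_int (k g) *\<^sub>R g)"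
    unfolding lattice_gen_def by blast
  then have "- a = (\<Sum>g\<in>F. of_int (- k g) *\<^sub>R g)" by (simp add: sum_negf)
  with F show ?thesis
    unfolding lattice_gen_def by (intro CollectI exI[of _ F] exI[of _ "\<lambda>g. - k g"]) auto
qed

lemma lattice_gen_add:
  "a \<in> lattice_gen G \<Longrightarrow> b \<in> lattice_gen G \<Longrightarrow> a + b \<in> lattice_gen G"
proof -
  assume "a \<in> lattice_gen G" "b \<in> lattice_gen G"
  then obtain F k F' k' where F: "finite F" "F \<subseteq> G" "a = (\<Sum>g\<in>F. of_int (k g) *\<^sub>R g)"
    and F': "finite F'" "F' \<subseteq> G" "b = (\<Sum>g\<in>F'. of_int (k' g) *\<^sub>R g)"
    unfolding lattice_gen_def by blast
  define K where "K g = (if g \<in> F then k g else 0) + (if g \<in> F' then k' g else 0)" for g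
  have a: "(\<Sum>g\<in>F \<union> F'. of_int (if g \<in> F then k g else 0) *\<^sub>R g) = a"
    unfolding F(3) by (rule sum.mono_neutral_cong_right) (use F F' in auto)
  have b: "(\<Sum>g\<in>F \<union> F'. of_int (if g \<in> F' then k' g else 0) *\<^sub>R g) = b"
    unfolding F'(3) by (rule sum.mono_neutral_cong_right) (use F F' in auto)
  have "a + b = (\<Sum>g\<in>F \<union> F'. of_int (K g) *\<^sub>R g)"
    unfolding K_def of_int_add scaleR_add_left sum.distrib a b ..
  with F F' show ?thesis
    unfolding lattice_gen_def by (intro CollectI exI[of _ "F \<union> F'"] exI[of _ K]) auto
qed

lemma lattice_gen_sum:
  "finite A \<Longrightarrow> (\<And>a. a \<in> A \<Longrightarrow> f a \<in> lattice_gen G) \<Longrightarrow> sum f A \<in> lattice_gen G"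
  by (induction A rule: finite_induct) (auto intro: lattice_gen_zero lattice_gen_add)

lemma lattice_gen_least:
  assumes "G \<subseteq> S" and "0 \<in> S"
    and add: "\<And>a b. a \<in> S \<Longrightarrow> b \<in> S \<Longrightarrow> a + b \<in> S"
    and uminus: "\<And>a. a \<in> S \<Longrightarrow> - a \<in> S"
  shows "lattice_gen G \<subseteq> S"
proof
  have of_nat: "of_nat n *\<^sub>R a \<in> S" if "a \<in> S" for a n
    by (induction n) (use that \<open>0 \<in> S\<close> add in \<open>auto simp: scaleR_add_left\<close>)
  have of_int: "of_int k *\<^sub>R a \<in> S" if "a \<in> S" for a k
    by (cases k rule: int_cases2) (use of_nat[OF that] uminus in auto)
  fix v assume "v \<in> lattice_gen G"
  then obtain F k where F: "finite F" "F \<subseteq> G" "v = (\<Sum>g\<in>F. of_int (k g) *\<^sub>R g)"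
    unfolding lattice_gen_def by blast
  from F(1,2) have "(\<Sum>g\<in>F. of_int (k g) *\<^sub>R g) \<in> S"
    by (induction F rule: finite_induct) (use assms of_int in auto)
  with F(3) show "v \<in> S" by simp
qed

definition half_word :: "bit ^ 'n \<Rightarrow> real ^ 'n" where
  "half_word x = (\<chi> i. if x $ i = 1 then 1/2 else 0)"

lemma half_word_component: "half_word x $ i = (if i \<in> code_supp x then 1/2 else 0)"
  by (simp add: half_word_def code_supp_def)

lemma code_lattice_eq: "code_lattice C = lattice_gen (range (\<lambda>i. axis i 1) \<union> half_word ` C)"
  unfolding code_lattice_def half_word_def by (simp add: full_SetCompr_eq setcompr_eq_image)

definition code_cosets :: "(bit ^ 'n) set \<Rightarrow> (real ^ 'n) set" where
  "code_cosets C = {v. \<exists>x\<in>C. \<forall>i. v $ i - half_word x $ i \<in> \<int>}"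

lemma code_lattice_subset_code_cosets:
  assumes "binary_linear_code C"
  shows "code_lattice C \<subseteq> code_cosets C"
  unfolding code_lattice_eq
proof (rule lattice_gen_least)
  have C0: "0 \<in> C" and C_add: "\<And>x y. x \<in> C \<Longrightarrow> y \<in> C \<Longrightarrow> x + y \<in> C"
    using assms unfolding binary_linear_code_def by auto
  show "0 \<in> code_cosets C"
    unfolding code_cosets_def using C0 by (auto intro!: bexI[of _ 0] simp: half_word_def)
  show "range (\<lambda>i. axis i 1) \<union> half_word ` C \<subseteq> code_cosets C"
    unfolding code_cosets_def using C0 by (auto intro: bexI[of _ 0] simp: half_word_def axis_def)
  show "a + b \<in> code_cosets C" if ab: "a \<in> code_cosets C" "b \<in> code_cosets C" for a b
  proof -
    obtain x y where x: "x \<in> C" "\<forall>i. a $ i - half_word x $ i \<in> \<int>"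
      and y: "y \<in> C" "\<forall>i. b $ i - half_word y $ i \<in> \<int>"
      using ab unfolding code_cosets_def by blast
    have "(a + b) $ i - half_word (x + y) $ i \<in> \<int>" for i
    proof -
      have "(a + b) $ i - half_word (x + y) $ i = (a $ i - half_word x $ i) + (b $ i - half_word y $ i)
          + (if x $ i = 1 \<and> y $ i = 1 then 1 else 0)"
        by (cases "x $ i"; cases "y $ i") (auto simp: half_word_def)
      also have "\<dots> \<in> \<int>" using x(2) y(2) by auto
      finally show ?thesis .
    qed
    with C_add[OF x(1) y(1)] show ?thesis unfolding code_cosets_def by blast
  qed
  show "- a \<in> code_cosets C" if a: "a \<in> code_cosets C" for a
  proof -
    obtain x where x: "x \<in> C" "\<forall>i. a $ i - half_word x $ i \<in> \<int>"
      using a unfolding code_cosets_def by blast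
    have "(- a) $ i - half_word x $ i \<in> \<int>" for i
    proof -
      have "2 * half_word x $ i \<in> \<int>" by (simp add: half_word_component)
      then have "- (a $ i - half_word x $ i) - 2 * half_word x $ i \<in> \<int>"
        using x(2) by (blast intro: Ints_diff Ints_minus)
      also have "- (a $ i - half_word x $ i) - 2 * half_word x $ i = (- a) $ i - half_word x $ i"
        by simp
      finally show ?thesis .
    qed
    with x(1) show ?thesis unfolding code_cosets_def by blast
  qed
qed

lemma inner_self_ge_sum_bounds:
  fixes v :: "real ^ 'n"
  assumes bound: "\<And>i. b i \<le> (v $ i)\<^sup>2"
  shows "sum b UNIV \<le> v \<bullet> v"
    and "v \<bullet> v = sum b UNIV \<Longrightarrow> (v $ i)\<^sup>2 = b i"
proof -
  have v: "v \<bullet> v = (\<Sum>i\<in>UNIV. (v $ i)\<^sup>2)"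
    by (simp add: inner_vec_def power2_eq_square)
  show "sum b UNIV \<le> v \<bullet> v"
    unfolding v by (rule sum_mono) (rule bound)
  show "(v $ i)\<^sup>2 = b i" if "v \<bullet> v = sum b UNIV"
  proof (rule ccontr)
    assume "(v $ i)\<^sup>2 \<noteq> b i"
    with bound have "b i < (v $ i)\<^sup>2" by (simp add: order_less_le)
    then have "sum b UNIV < v \<bullet> v"
      unfolding v by (intro sum_strict_mono_strong[of _ i]) (use bound in auto)
    with that show False by simp
  qed
qed

definition signed_axes :: "(real ^ 'n) set" where
  "signed_axes = range (\<lambda>i. axis i 1) \<union> range (\<lambda>i. axis i (-1))"

lemma integer_vector_norm:
  fixes v :: "real ^ 'n"
  assumes int: "\<And>i. v $ i \<in> \<int>" and "v \<noteq> 0"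
  shows "1 \<le> v \<bullet> v" and "v \<bullet> v = 1 \<Longrightarrow> v \<in> signed_axes"
proof -
  obtain j where "v $ j \<noteq> 0" using \<open>v \<noteq> 0\<close> by (auto simp: vec_eq_iff)
  with int have "1 \<le> \<bar>v $ j\<bar>" by (simp add: Ints_nonzero_abs_ge1)
  then have bound: "(if i = j then 1 else 0) \<le> (v $ i)\<^sup>2" for i
    using abs_le_square_iff[of 1 "v $ j"] by auto
  have sum: "(\<Sum>i\<in>UNIV. if i = j then 1 else 0) = (1::real)" by simp
  show "1 \<le> v \<bullet> v" using inner_self_ge_sum_bounds(1)[OF bound] by (simp only: sum)
  assume "v \<bullet> v = 1"
  then have sq: "(v $ i)\<^sup>2 = (if i = j then 1 else 0)" for i
    using inner_self_ge_sum_bounds(2)[OF bound] by (simp only: sum)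
  have "v $ i = 0" if "i \<noteq> j" for i using sq[of i] that by simp
  then have "v = axis j (v $ j)" by (auto simp: vec_eq_iff axis_def)
  moreover have "v $ j = 1 \<or> v $ j = -1" using sq[of j] by (simp add: power2_eq_1_iff)
  ultimately show "v \<in> signed_axes" unfolding signed_axes_def by auto
qed

lemma half_integer_vector_norm:
  fixes v :: "real ^ 'n"
  assumes half: "\<And>i. i \<in> S \<Longrightarrow> v $ i - 1/2 \<in> \<int>"
  shows "card S / 4 \<le> v \<bullet> v"
    and "v \<bullet> v = card S / 4 \<Longrightarrow> i \<in> S \<Longrightarrow> v $ i = 1/2 \<or> v $ i = -1/2"
    and "v \<bullet> v = card S / 4 \<Longrightarrow> i \<notin> S \<Longrightarrow> v $ i = 0"
proof -
  have "1/2 \<le> \<bar>v $ i\<bar>" if i: "i \<in> S" for i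
  proof -
    obtain k :: int where "v $ i = k + 1/2" using half[OF i] by (metis Ints_cases diff_eq_eq)
    then show ?thesis by (cases "k \<ge> 0") linarith+
  qed
  then have bound: "(if i \<in> S then 1/4 else 0) \<le> (v $ i)\<^sup>2" for i
    using abs_le_square_iff[of "1/2" "v $ i"] by (auto simp: power2_eq_square)
  have sum: "(\<Sum>i\<in>UNIV. if i \<in> S then 1/4 else 0) = real (card S) / 4"
    by (simp add: sum.If_cases)
  show "card S / 4 \<le> v \<bullet> v" using inner_self_ge_sum_bounds(1)[OF bound] by (simp only: sum)
  assume "v \<bullet> v = card S / 4"
  then have sq: "(v $ i)\<^sup>2 = (if i \<in> S then (1/2)\<^sup>2 else 0)"
    using inner_self_ge_sum_bounds(2)[OF bound] by (simp add: sum power2_eq_square)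
  show "i \<in> S \<Longrightarrow> v $ i = 1/2 \<or> v $ i = -1/2" using sq by (simp add: power2_eq_iff)
  show "i \<notin> S \<Longrightarrow> v $ i = 0" using sq by simp
qed

definition half_sign_vector :: "bit ^ 'n \<Rightarrow> 'n set \<Rightarrow> real ^ 'n" where
  "half_sign_vector x T =
     (\<chi> i. if i \<in> code_supp x then (if i \<in> T then 1/2 else -1/2) else 0)"

definition weight4_half_vectors :: "(bit ^ 'n) set \<Rightarrow> (real ^ 'n) set" where
  "weight4_half_vectors C =
     (\<Union>x\<in>{x \<in> C. hamming_weight x = 4}. half_sign_vector x ` Pow (code_supp x))"

definition short_vectors :: "(bit ^ 'n) set \<Rightarrow> (real ^ 'n) set" where
  "short_vectors C = signed_axes \<union> weight4_half_vectors C"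

lemma code_cosets_norm:
  assumes weight: "\<forall>x\<in>C. x \<noteq> 0 \<longrightarrow> hamming_weight x \<ge> 4"
    and v: "v \<in> code_cosets C" "v \<noteq> 0"
  shows "1 \<le> v \<bullet> v" and "v \<bullet> v = 1 \<Longrightarrow> v \<in> short_vectors C"
proof -
  obtain x where x: "x \<in> C" "\<And>i. v $ i - half_word x $ i \<in> \<int>"
    using v(1) unfolding code_cosets_def by blast
  have "1 \<le> v \<bullet> v \<and> (v \<bullet> v = 1 \<longrightarrow> v \<in> short_vectors C)"
  proof (cases "x = 0")
    case True
    with x(2) have "v $ i \<in> \<int>" for i by (simp add: half_word_def)
    with integer_vector_norm[of v] v(2) show ?thesis by (auto simp: short_vectors_def)
  next
    case False
    define S where "S = code_supp x"
    have half: "v $ i - 1/2 \<in> \<int>" if "i \<in> S" for i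
      using x(2)[of i] that by (simp add: S_def half_word_component)
    have "4 \<le> card S" using weight x(1) False by (simp add: S_def hamming_weight_def)
    then have "1 \<le> card S / 4" by simp
    also have "\<dots> \<le> v \<bullet> v" by (rule half_integer_vector_norm(1)[OF half])
    finally have "1 \<le> v \<bullet> v" .
    moreover have "v \<in> weight4_half_vectors C" if "v \<bullet> v = 1"
    proof -
      have "card S = 4" using \<open>1 \<le> card S / 4\<close> \<open>card S / 4 \<le> v \<bullet> v\<close> that by simp
      with that have "v \<bullet> v = card S / 4" by simp
      note coords = half_integer_vector_norm(2,3)[OF half this]
      have "v = half_sign_vector x {i \<in> S. v $ i = 1/2}"
        using coords by (auto simp: vec_eq_iff half_sign_vector_def S_def)
      with x(1) \<open>card S = 4\<close> show ?thesis
        unfolding weight4_half_vectors_def hamming_weight_def S_def by blast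
    qed
    ultimately show ?thesis unfolding short_vectors_def by blast
  qed
  then show "1 \<le> v \<bullet> v" and "v \<bullet> v = 1 \<Longrightarrow> v \<in> short_vectors C"
    by auto
qed

lemma signed_axes_subset_code_lattice: "signed_axes \<subseteq> code_lattice C"
proof -
  have pos: "axis i 1 \<in> code_lattice C" for i
    unfolding code_lattice_eq by (rule lattice_gen_base) simp
  have neg: "axis i (-1) = - axis i (1::real)" for i by (simp add: vec_eq_iff axis_def)
  have "axis i (-1) \<in> code_lattice C" for i
    unfolding neg code_lattice_eq by (intro lattice_gen_uminus lattice_gen_base) simp
  with pos show ?thesis unfolding signed_axes_def by auto
qed

lemma weight4_half_vectors_subset_code_lattice: "weight4_half_vectors C \<subseteq> code_lattice C"
proof
  fix v assume "v \<in> weight4_half_vectors C"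
  then obtain x T where x: "x \<in> C" "T \<subseteq> code_supp x" "v = half_sign_vector x T"
    unfolding weight4_half_vectors_def by auto
  have flip: "(\<Sum>k\<in>A. - axis k (1::real)) $ j = - (if j \<in> A then 1 else 0)" for A j
    by (simp add: sum_negf axis_def sum.delta' if_distrib cong: if_cong)
  have "v = half_word x + (\<Sum>i\<in>code_supp x - T. - axis i 1)"
    unfolding vec_eq_iff x(3)
    by (intro allI, simp only: vector_add_component flip)
      (auto simp: half_sign_vector_def half_word_component)
  also have "\<dots> \<in> code_lattice C"
    unfolding code_lattice_eq using x(1)
    by (intro lattice_gen_add lattice_gen_sum lattice_gen_uminus lattice_gen_base) auto
  finally show "v \<in> code_lattice C" .
qed

lemma inner_self_short_vectors:
  assumes "v \<in> short_vectors C"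
  shows "v \<bullet> v = 1"
  using assms unfolding short_vectors_def
proof
  assume "v \<in> signed_axes"
  then show ?thesis by (auto simp: signed_axes_def inner_axis_axis)
next
  assume "v \<in> weight4_half_vectors C"
  then obtain x T where x: "hamming_weight x = 4" "v = half_sign_vector x T"
    unfolding weight4_half_vectors_def by auto
  have "v \<bullet> v = (\<Sum>i\<in>UNIV. if i \<in> code_supp x then 1/4 else 0)"
    unfolding inner_vec_def x(2) by (intro sum.cong) (auto simp: half_sign_vector_def)
  also have "\<dots> = card (code_supp x) / 4" by (simp add: sum.If_cases)
  finally show ?thesis using x(1) by (simp add: hamming_weight_def)
qed

lemma min_vectors_code_lattice:
  assumes "binary_linear_code C" and "\<forall>x\<in>C. x \<noteq> 0 \<longrightarrow> hamming_weight x \<ge> 4"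
  shows "min_vectors (code_lattice C) = short_vectors C"
proof -
  let ?L = "code_lattice C"
  have short_in_L: "short_vectors C \<subseteq> ?L"
    unfolding short_vectors_def using signed_axes_subset_code_lattice weight4_half_vectors_subset_code_lattice by blast
  have norm_ge: "1 \<le> v \<bullet> v" and norm_eq: "v \<bullet> v = 1 \<Longrightarrow> v \<in> short_vectors C"
    if "v \<in> ?L" "v \<noteq> 0" for v
    using code_cosets_norm[OF assms(2)] code_lattice_subset_code_cosets[OF assms(1)] that by auto
  have "axis undefined 1 \<in> short_vectors C" unfolding short_vectors_def signed_axes_def by auto
  then have "1 \<in> {v \<bullet> v | v. v \<in> ?L \<and> v \<noteq> 0}"
    using short_in_L inner_self_short_vectors by force
  then have min: "lat_min ?L = 1"
    unfolding lat_min_def by (rule cInf_eq_minimum) (use norm_ge in blast)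
  show "min_vectors ?L = short_vectors C"
    unfolding min_vectors_def min using short_in_L norm_eq inner_self_short_vectors by force
qed

lemma code_supp_inj: "inj code_supp"
proof (rule injI)
  fix x y :: "bit ^ 'n" assume "code_supp x = code_supp y"
  then have "x $ i \<noteq> 0 \<longleftrightarrow> y $ i \<noteq> 0" for i by (auto simp: code_supp_def)
  then have "x $ i = y $ i" for i by (metis bit_not_zero_iff)
  then show "x = y" by (simp add: vec_eq_iff)
qed

lemma finite_binary_words: "finite (W :: (bit ^ 'n) set)"
  by (rule finite_imageD[of code_supp]) (auto intro: inj_on_subset[OF code_supp_inj])

lemma half_sign_vector_nonzero_iff: "half_sign_vector x T $ i \<noteq> 0 \<longleftrightarrow> i \<in> code_supp x"
  by (simp add: half_sign_vector_def)

lemma card_signed_axes: "card (signed_axes :: (real ^ 'n) set) = 2 * CARD('n)"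
proof -
  have "inj (\<lambda>i::'n. axis i c)" if "c \<noteq> 0" for c :: real
    using that by (auto intro: injI simp: axis_eq_axis)
  moreover have "range (\<lambda>i::'n. axis i (1::real)) \<inter> range (\<lambda>i. axis i (-1)) = {}"
    by (auto simp: axis_eq_axis)
  ultimately show ?thesis
    unfolding signed_axes_def by (simp add: card_Un_disjoint card_image)
qed

lemma card_weight4_half_vectors:
  "card (weight4_half_vectors C :: (real ^ 'n) set) = 16 * card {x \<in> C. hamming_weight x = 4}"
proof -
  define W where "W = {x \<in> C. hamming_weight x = 4}"
  have inj: "inj_on (half_sign_vector x) (Pow (code_supp x))" for x
  proof (rule inj_onI)
    fix T T' assume T: "T \<in> Pow (code_supp x)" "T' \<in> Pow (code_supp x)"
      and eq: "half_sign_vector x T = half_sign_vector x T'"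
    have "i \<in> T \<longleftrightarrow> i \<in> T'" for i
      using T arg_cong[OF eq, of "\<lambda>v. v $ i"] by (auto simp: half_sign_vector_def split: if_splits)
    then show "T = T'" by blast
  qed
  have card16: "card (half_sign_vector x ` Pow (code_supp x)) = 16" if "x \<in> W" for x
    using that by (simp add: W_def hamming_weight_def card_image[OF inj] card_Pow)
  have disjoint: "half_sign_vector x ` Pow (code_supp x) \<inter> half_sign_vector y ` Pow (code_supp y) = {}"
    if "x \<noteq> y" for x y
  proof (rule ccontr)
    assume "half_sign_vector x ` Pow (code_supp x) \<inter> half_sign_vector y ` Pow (code_supp y) \<noteq> {}"
    then obtain T T' where "half_sign_vector x T = half_sign_vector y T'" by blast
    then have "code_supp x = code_supp y" by (metis half_sign_vector_nonzero_iff set_eqI)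
    with code_supp_inj \<open>x \<noteq> y\<close> show False by (blast dest: injD)
  qed
  have "card (weight4_half_vectors C) = (\<Sum>x\<in>W. card (half_sign_vector x ` Pow (code_supp x)))"
    unfolding weight4_half_vectors_def W_def[symmetric]
    by (rule card_UN_disjoint) (simp_all add: finite_binary_words disjoint)
  also have "\<dots> = 16 * card W" using card16 by simp
  finally show ?thesis unfolding W_def .
qed

lemma card_short_vectors:
  "card (short_vectors C :: (real ^ 'n) set)
     = 2 * CARD('n) + 16 * card {x \<in> C. hamming_weight x = 4}"
proof -
  have "v \<notin> signed_axes" if "v \<in> weight4_half_vectors C" for v
  proof
    obtain x T where v: "v = half_sign_vector x T" "hamming_weight x = 4"
      using \<open>v \<in> weight4_half_vectors C\<close> unfolding weight4_half_vectors_def by blast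
    then obtain i where "i \<in> code_supp x" by (fastforce simp: hamming_weight_def)
    then have "v $ i = 1/2 \<or> v $ i = -1/2" using v(1) by (simp add: half_sign_vector_def)
    moreover assume "v \<in> signed_axes"
    then have "v $ i \<in> {0, 1, -1}" by (auto simp: signed_axes_def axis_def split: if_splits)
    ultimately show False by auto
  qed
  then have "signed_axes \<inter> weight4_half_vectors C = {}" by blast
  moreover have "finite (signed_axes :: (real ^ 'n) set)"
    unfolding signed_axes_def by simp
  moreover have "finite (weight4_half_vectors C :: (real ^ 'n) set)"
    unfolding weight4_half_vectors_def by (auto intro: finite_binary_words)
  ultimately show ?thesis
    by (simp add: short_vectors_def card_Un_disjoint card_signed_axes card_weight4_half_vectors)
qed

definition pair_matrix :: "'n set \<Rightarrow> real ^ 'n ^ 'n" where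
  "pair_matrix P = (\<chi> a b. if {a, b} = P then 1 else 0)"

lemma inj_on_pair_matrix:
  assumes "\<And>P. P \<in> \<P> \<Longrightarrow> \<exists>a b. P = {a, b}"
  shows "inj_on pair_matrix \<P>"
proof (rule inj_onI)
  fix P Q assume "P \<in> \<P>" "Q \<in> \<P>" and eq: "pair_matrix P = pair_matrix Q"
  then obtain a b where ab: "P = {a, b}" using assms by blast
  have "pair_matrix P $ a $ b = pair_matrix Q $ a $ b" using eq by simp
  with ab show "P = Q" by (simp add: pair_matrix_def split: if_splits)
qed

lemma independent_pair_matrices:
  assumes pairs: "\<And>P. P \<in> \<P> \<Longrightarrow> \<exists>a b. P = {a, b}"
  shows "independent (pair_matrix ` \<P>)"
  unfolding independent_explicit
proof (intro conjI allI impI ballI)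
  show "finite (pair_matrix ` \<P>)" by simp
  fix c v
  assume comb: "(\<Sum>w\<in>pair_matrix ` \<P>. c w *\<^sub>R w) = 0" and "v \<in> pair_matrix ` \<P>"
  then obtain P where P: "P \<in> \<P>" "v = pair_matrix P" by blast
  then obtain a b where ab: "P = {a, b}" using pairs by blast
  have "0 = (\<Sum>w\<in>pair_matrix ` \<P>. c w *\<^sub>R w) $ a $ b" using comb by simp
  also have "\<dots> = (\<Sum>Q\<in>\<P>. c (pair_matrix Q) * (pair_matrix Q $ a $ b))"
    by (simp add: sum.reindex[OF inj_on_pair_matrix[OF pairs]])
  also have "\<dots> = (\<Sum>Q\<in>\<P>. if {a, b} = Q then c (pair_matrix Q) else 0)"
    by (intro sum.cong) (auto simp: pair_matrix_def)
  also have "\<dots> = c v" using P ab by (simp add: sum.delta)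
  finally show "c v = 0" by simp
qed

lemma symmetric_in_span_pair_matrices:
  fixes A :: "real ^ 'n ^ 'n"
  assumes symmetric: "\<And>a b. A $ a $ b = A $ b $ a"
    and supported: "\<And>a b. {a, b} \<notin> \<P> \<Longrightarrow> A $ a $ b = 0"
  shows "A \<in> span (pair_matrix ` \<P>)"
proof -
  \<comment> \<open>\<open>c P\<close> reads \<open>A\<close> at some ordered pair enumerating \<open>P\<close>; by symmetry the choice is irrelevant.\<close>
  define c where "c P = (let p = SOME p. {fst p, snd p} = P in A $ fst p $ snd p)" for P :: "'n set"
  have c: "c {a, b} = A $ a $ b" for a b
  proof -
    have "\<exists>p. {fst p, snd p} = {a, b}" by (rule exI[of _ "(a, b)"]) simp
    then have "{fst (SOME p. {fst p, snd p} = {a, b}), snd (SOME p. {fst p, snd p} = {a, b})} = {a, b}"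
      by (rule someI_ex)
    with symmetric show ?thesis unfolding c_def Let_def by (auto simp: doubleton_eq_iff)
  qed
  have "A $ a $ b = (\<Sum>P\<in>\<P>. c P *\<^sub>R pair_matrix P) $ a $ b" for a b
  proof -
    have "(\<Sum>P\<in>\<P>. c P *\<^sub>R pair_matrix P) $ a $ b = (\<Sum>P\<in>\<P>. if {a, b} = P then c P else 0)"
      unfolding sum_component vector_scaleR_component
      by (intro sum.cong) (auto simp: pair_matrix_def)
    also have "\<dots> = A $ a $ b" using c supported by (auto simp: sum.delta)
    finally show ?thesis by simp
  qed
  then have "A = (\<Sum>P\<in>\<P>. c P *\<^sub>R pair_matrix P)" by (simp add: vec_eq_iff)
  also have "\<dots> \<in> span (pair_matrix ` \<P>)"
    by (intro span_sum span_scale span_base) auto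
  finally show ?thesis .
qed

definition weight4_pairs :: "(bit ^ 'n) set \<Rightarrow> 'n set set" where
  "weight4_pairs C = {P. \<exists>i j. i \<noteq> j \<and> P = {i, j} \<and>
     (\<exists>x\<in>C. hamming_weight x = 4 \<and> i \<in> code_supp x \<and> j \<in> code_supp x)}"

definition support_pairs :: "(bit ^ 'n) set \<Rightarrow> 'n set set" where
  "support_pairs C = range (\<lambda>i. {i}) \<union> weight4_pairs C"

lemma support_pairs_doubletons: "P \<in> support_pairs C \<Longrightarrow> \<exists>a b. P = {a, b}"
  unfolding support_pairs_def weight4_pairs_def by auto

lemma outer_short_vector_in_span:
  assumes "v \<in> short_vectors C"
  shows "outer v \<in> span (pair_matrix ` support_pairs C)"
proof (rule symmetric_in_span_pair_matrices)
  show "outer v $ a $ b = outer v $ b $ a" for a b by (simp add: outer_def mult.commute)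
  show "outer v $ a $ b = 0" if ab: "{a, b} \<notin> support_pairs C" for a b
  proof (rule ccontr)
    assume "outer v $ a $ b \<noteq> 0"
    then have va: "v $ a \<noteq> 0" and vb: "v $ b \<noteq> 0" by (auto simp: outer_def)
    from assms[unfolded short_vectors_def] show False
    proof
      assume "v \<in> signed_axes"
      then obtain j c where "v = axis j c" unfolding signed_axes_def by auto
      with va vb have "a = j" "b = j" by (auto simp: axis_def split: if_splits)
      with ab show False unfolding support_pairs_def by auto
    next
      assume "v \<in> weight4_half_vectors C"
      then obtain x T where x: "x \<in> C" "hamming_weight x = 4" "v = half_sign_vector x T"
        unfolding weight4_half_vectors_def by auto
      with va vb have "a \<in> code_supp x" "b \<in> code_supp x"
        using half_sign_vector_nonzero_iff by auto
      with x have "{a, b} \<in> support_pairs C"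
        unfolding support_pairs_def weight4_pairs_def by (cases "a = b") blast+
      with ab show False by simp
    qed
  qed
qed

lemma pair_matrix_in_span_outer_short_vectors:
  assumes "P \<in> support_pairs C"
  shows "pair_matrix P \<in> span (outer ` (short_vectors C))"
  using assms unfolding support_pairs_def
proof
  assume "P \<in> range (\<lambda>i. {i})"
  then obtain i where "P = {i}" by blast
  then have "pair_matrix P = outer (axis i 1)"
    by (auto simp: vec_eq_iff pair_matrix_def outer_def axis_def)
  moreover have "axis i 1 \<in> short_vectors C" unfolding short_vectors_def signed_axes_def by auto
  ultimately show ?thesis by (auto intro: span_base)
next
  assume "P \<in> weight4_pairs C"
  then obtain i j x where ij: "i \<noteq> j" "P = {i, j}" "x \<in> C" "hamming_weight x = 4"
    "i \<in> code_supp x" "j \<in> code_supp x"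
    unfolding weight4_pairs_def by blast
  define S where "S = code_supp x"
  have span: "outer (half_sign_vector x T) \<in> span (outer ` (short_vectors C))"
    if "T \<subseteq> S" for T
    using that ij(3,4) unfolding short_vectors_def weight4_half_vectors_def S_def
    by (blast intro: span_base)
  \<comment> \<open>Flipping the signs at i and j: the alternating sum of the four products of signs at
    a and b vanishes unless {a, b} = {i, j}.\<close>
  have "pair_matrix P = outer (half_sign_vector x S) - outer (half_sign_vector x (S - {j}))
      - outer (half_sign_vector x (S - {i})) + outer (half_sign_vector x (S - {i, j}))"
    using ij(1,5,6) unfolding vec_eq_iff ij(2) S_def
    by (auto simp: pair_matrix_def outer_def half_sign_vector_def doubleton_eq_iff)
  also have "\<dots> \<in> span (outer ` (short_vectors C))"
    by (intro span_add span_diff span) auto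
  finally show ?thesis .
qed

lemma dim_outer_short_vectors:
  "dim (outer ` (short_vectors C)) = card (support_pairs C)"
proof -
  have "span (outer ` (short_vectors C)) = span (pair_matrix ` support_pairs C)"
    unfolding span_eq
    using outer_short_vector_in_span pair_matrix_in_span_outer_short_vectors by blast
  then have "dim (outer ` (short_vectors C)) = card (pair_matrix ` support_pairs C)"
    by (metis dim_span dim_span_eq_card_independent independent_pair_matrices support_pairs_doubletons)
  also have "\<dots> = card (support_pairs C)"
    by (intro card_image inj_on_pair_matrix support_pairs_doubletons)
  finally show ?thesis .
qed

lemma card_support_pairs:
  fixes C :: "(bit ^ 'n) set"
  shows "card (support_pairs C) = CARD('n) * (CARD('n) + 1) div 2 -
    card {P :: 'n set. \<exists>i j. i \<noteq> j \<and> P = {i, j} \<and>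
      \<not> (\<exists>x\<in>C. hamming_weight x = 4 \<and> i \<in> code_supp x \<and> j \<in> code_supp x)}"
    (is "_ = _ - card ?uncovered")
proof -
  let ?n = "CARD('n)"
  have two_subsets: "{P :: 'n set. \<exists>i j. i \<noteq> j \<and> P = {i, j}} = weight4_pairs C \<union> ?uncovered"
    unfolding weight4_pairs_def by blast
  have "{P :: 'n set. \<exists>i j. i \<noteq> j \<and> P = {i, j}} = {P. P \<subseteq> UNIV \<and> card P = 2}"
    by (auto simp: card_2_iff)
  then have "card {P :: 'n set. \<exists>i j. i \<noteq> j \<and> P = {i, j}} = ?n choose 2"
    using n_subsets[of "UNIV :: 'n set" 2] by simp
  moreover have "weight4_pairs C \<inter> ?uncovered = {}"
    unfolding weight4_pairs_def by (auto simp: doubleton_eq_iff)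
  ultimately have pairs: "card (weight4_pairs C) + card ?uncovered = ?n choose 2"
    unfolding two_subsets by (simp add: card_Un_disjoint)
  have "range (\<lambda>i::'n. {i}) \<inter> weight4_pairs C = {}"
    unfolding weight4_pairs_def by (auto simp: doubleton_eq_iff)
  then have "card (support_pairs C) = ?n + card (weight4_pairs C)"
    unfolding support_pairs_def by (simp add: card_Un_disjoint card_image)
  also have "\<dots> = (?n + (?n choose 2)) - card ?uncovered" using pairs by simp
  also have "?n + (?n choose 2) = ?n * (?n + 1) div 2"
    by (cases ?n) (simp_all add: choose_two algebra_simps)
  finally show ?thesis .
qed

theorem proposition7p2:
  fixes C :: "(bit ^ 'n) set"
  assumes "binary_linear_code C"
    and "\<forall>x\<in>C. x \<noteq> 0 \<longrightarrow> hamming_weight x \<ge> 4"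
  defines "w4 \<equiv> card {x \<in> C. hamming_weight x = 4}"
    and "t \<equiv> card {P :: 'n set. \<exists>i j. i \<noteq> j \<and> P = {i, j} \<and>
              \<not> (\<exists>x\<in>C. hamming_weight x = 4 \<and> i \<in> code_supp x \<and> j \<in> code_supp x)}"
  shows "kissing_s (code_lattice C) = CARD('n) + 8 * w4
    \<and> perf_rank (code_lattice C) = CARD('n) * (CARD('n) + 1) div 2 - t"
  unfolding kissing_s_def perf_rank_def min_vectors_code_lattice[OF assms(1,2)]
  by (simp add: card_short_vectors dim_outer_short_vectors card_support_pairs w4_def t_def)

end
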